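(* There is no algorithm simulating $f(p)=2p$ on $\mathcal{P}=(0,1/2)$. More precisely: let $R_0$ be a random variable with a fixed law (not depending on $p$), and for $p\in(0,1/2)$ let $\mathbb{P}_p$ be the law under which $X_1,X_2,\dots$ are i.i.d. Bernoulli$(p)$ and independent of $R_0$. Let $T$ be a random time, finite $\mathbb{P}_p$-a.s. for every $p$, such that $\{T\le n\}\in\sigma(X_1,\dots,X_n,R_0)$ for every $n$, and let $S=S(X_1,\dots,X_T,R_0)$ be a measurable function (not depending on $p$) with $S\in[0,1]$. Then it is impossible that $\mathbb{E}_pS=2p$ for all $p\in(0,1/2)$.
   Context: By Lemma 1 (an $s$-coin exists iff an unbiased $[0,1]$-valued estimator of $s$ exists), the nonexistence of such an estimator $S$ is equivalent to the nonexistence of an algorithm producing a $2p$-coin from i.i.d. $p$-coins and independent auxiliary randomness. *)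

theory Defs
  imports "HOL-Probability.Probability"
begin

text \<open>Coin sequences are \<open>x :: nat \<Rightarrow> bool\<close> with \<open>x i\<close> playing the role of X_(i+1);
  the auxiliary randomness \<open>R0\<close> takes values in the space of a fixed probability measure.\<close>

definition coin_space :: "'r measure \<Rightarrow> ((nat \<Rightarrow> bool) \<times> 'r) measure" where
  "coin_space \<mu> = (PiM UNIV (\<lambda>_. count_space UNIV)) \<Otimes>\<^sub>M \<mu>"

definition coin_law :: "'r measure \<Rightarrow> real \<Rightarrow> ((nat \<Rightarrow> bool) \<times> 'r) measure" where
  "coin_law \<mu> p = (PiM UNIV (\<lambda>_. measure_pmf (bernoulli_pmf p))) \<Otimes>\<^sub>M \<mu>"

text \<open>Forget all coins except the first n (n may be infinite): the observation (X_1..X_n, R0).\<close>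
definition obs :: "enat \<Rightarrow> (nat \<Rightarrow> bool) \<times> 'r \<Rightarrow> (nat \<Rightarrow> bool) \<times> 'r" where
  "obs n = (\<lambda>(x, r). (\<lambda>i. if enat i < n then x i else False, r))"

text \<open>An event lies in sigma(X_1,..,X_n,R0) iff it is measurable and determined by obs n.\<close>
definition in_sigma_obs :: "'r measure \<Rightarrow> nat \<Rightarrow> ((nat \<Rightarrow> bool) \<times> 'r) set \<Rightarrow> bool" where
  "in_sigma_obs \<mu> n E \<longleftrightarrow> E \<in> sets (coin_space \<mu>) \<and>
     (\<forall>\<omega>\<in>space (coin_space \<mu>). \<omega> \<in> E \<longleftrightarrow> obs (enat n) \<omega> \<in> E)"

end

theory Submission
  imports Defs
begin

(* Put Q = 1 - S; this is a nonnegative, bounded statistic of the stopped observation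
   (X_1, ..., X_T, R0), and the hypothesis gives E_p Q = 1 - 2p, which tends to 0 as p -> 1/2.
   Splitting according to the value n of T and the word w = X_1 ... X_n, Q is the sum over all
   finite words w of  [X_1 ... X_|w| = w] * g_w(R0),  where the weight g_w(r) equals Q at the
   observation (w, r) if T stops there, and 0 otherwise.  Hence E_p Q >= P_p(cylinder w) * E g_w
   for every word w.  Since E_(1/4) Q = 1/2 > 0 and T is a.s. finite, some w has E g_w > 0; as
   P_p(cylinder w) >= 4^(-|w|) uniformly for p in [1/4, 3/4], E_p Q stays bounded away from 0
   near p = 1/2, a contradiction. *)

lemma space_coin_space: "space (coin_space \<mu>) = UNIV \<times> space \<mu>"
  by (simp add: coin_space_def space_pair_measure space_PiM)

lemma space_coin_law: "space (coin_law \<mu> p) = space (coin_space \<mu>)"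
  by (simp add: coin_law_def space_coin_space space_pair_measure space_PiM)

lemma sets_coin_law: "sets (coin_law \<mu> p) = sets (coin_space \<mu>)"
  unfolding coin_law_def coin_space_def
  by (intro sets_pair_measure_cong sets_PiM_cong) auto

lemma prob_space_coin_law: "prob_space \<mu> \<Longrightarrow> prob_space (coin_law \<mu> p)"
  unfolding coin_law_def
  by (intro prob_space_pair prob_space_PiM) (auto simp: prob_space_measure_pmf)

definition bernoulli_coins :: "real \<Rightarrow> (nat \<Rightarrow> bool) measure" where
  "bernoulli_coins p = PiM UNIV (\<lambda>_. measure_pmf (bernoulli_pmf p))"

lemma coin_law_eq: "coin_law \<mu> p = bernoulli_coins p \<Otimes>\<^sub>M \<mu>"
  by (simp add: coin_law_def bernoulli_coins_def)

lemma prob_space_bernoulli_coins: "prob_space (bernoulli_coins p)"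
  unfolding bernoulli_coins_def by (intro prob_space_PiM) (auto simp: prob_space_measure_pmf)

lemma obs_in_space: "\<omega> \<in> space (coin_space \<mu>) \<Longrightarrow> obs n \<omega> \<in> space (coin_space \<mu>)"
  by (cases \<omega>) (auto simp: space_coin_space obs_def)

lemma obs_obs: "m \<le> n \<Longrightarrow> obs (enat m) (obs (enat n) \<omega>) = obs (enat m) \<omega>"
  by (cases \<omega>) (auto simp: obs_def fun_eq_iff)

definition pad_word :: "bool list \<Rightarrow> nat \<Rightarrow> bool" where
  "pad_word w = (\<lambda>i. if i < length w then w ! i else False)"

definition cylinder :: "bool list \<Rightarrow> (nat \<Rightarrow> bool) set" where
  "cylinder w = {x. \<forall>i < length w. x i = w ! i}"

lemma obs_eq_prefix: "obs (enat n) \<omega> = (pad_word (map (fst \<omega>) [0..<n]), snd \<omega>)"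
  by (cases \<omega>) (auto simp: obs_def fun_eq_iff pad_word_def)

lemma prefix_in_cylinder: "fst \<omega> \<in> cylinder (map (fst \<omega>) [0..<n])"
  by (auto simp: cylinder_def)

lemma obs_cylinder: "fst \<omega> \<in> cylinder w \<Longrightarrow> obs (enat (length w)) \<omega> = (pad_word w, snd \<omega>)"
  by (cases \<omega>) (auto simp: obs_def fun_eq_iff cylinder_def pad_word_def)

lemma cylinder_prod_emb:
  assumes "\<And>i. space (M i) = UNIV"
  shows "cylinder w = prod_emb UNIV M {..<length w} (\<Pi>\<^sub>E i\<in>{..<length w}. {w ! i})"
  using assms by (auto simp: cylinder_def prod_emb_def space_PiM PiE_iff)

lemma sets_cylinder: "cylinder w \<in> sets (bernoulli_coins p)"
  unfolding bernoulli_coins_def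
  by (subst cylinder_prod_emb[where M = "\<lambda>_. measure_pmf (bernoulli_pmf p)"]) (auto intro!: sets_PiM_I)

lemma measure_cylinder:
  "measure (bernoulli_coins p) (cylinder w) = (\<Prod>i < length w. pmf (bernoulli_pmf p) (w ! i))"
proof -
  have "emeasure (bernoulli_coins p) (cylinder w)
      = (\<Prod>i < length w. emeasure (measure_pmf (bernoulli_pmf p)) {w ! i})"
    unfolding bernoulli_coins_def
    by (subst cylinder_prod_emb[where M = "\<lambda>_. measure_pmf (bernoulli_pmf p)"], simp)
       (intro emeasure_PiM_emb, auto simp: prob_space_measure_pmf)
  also have "\<dots> = ennreal (\<Prod>i < length w. pmf (bernoulli_pmf p) (w ! i))"
    by (simp add: emeasure_pmf_single prod_ennreal)
  finally show ?thesis by (simp add: measure_def prod_nonneg)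
qed

lemma measure_cylinder_lower_bound:
  assumes "p \<in> {1/4..3/4}"
  shows "(1/4) ^ length w \<le> measure (bernoulli_coins p) (cylinder w)"
proof -
  have "(\<Prod>i < length w. (1/4::real)) \<le> (\<Prod>i < length w. pmf (bernoulli_pmf p) (w ! i))"
  proof (intro prod_mono conjI)
    fix i show "(1/4::real) \<le> pmf (bernoulli_pmf p) (w ! i)"
      using assms by (cases "w ! i") auto
  qed auto
  then show ?thesis by (simp add: measure_cylinder)
qed

lemma enat_eq_iff_le: "t = enat n \<longleftrightarrow> t \<le> enat n \<and> (n = 0 \<or> \<not> t \<le> enat (n - 1))"
  by (cases t) auto

locale coin_stopping_time =
  fixes \<mu> :: "'r measure" and T :: "(nat \<Rightarrow> bool) \<times> 'r \<Rightarrow> enat"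
  assumes prob_space_base: "prob_space \<mu>"
    and stopping: "\<And>n. in_sigma_obs \<mu> n {\<omega> \<in> space (coin_space \<mu>). T \<omega> \<le> enat n}"
begin

definition stops_at :: "nat \<Rightarrow> ((nat \<Rightarrow> bool) \<times> 'r) set" where
  "stops_at n = {\<omega> \<in> space (coin_space \<mu>). T \<omega> = enat n}"

lemma T_le_obs_iff:
  "\<omega> \<in> space (coin_space \<mu>) \<Longrightarrow> T (obs (enat n) \<omega>) \<le> enat n \<longleftrightarrow> T \<omega> \<le> enat n"
  using stopping[of n] obs_in_space[of \<omega> \<mu> "enat n"] unfolding in_sigma_obs_def by blast

lemma sets_stops_at: "stops_at n \<in> sets (coin_space \<mu>)"
proof -
  have le: "{\<omega> \<in> space (coin_space \<mu>). T \<omega> \<le> enat m} \<in> sets (coin_space \<mu>)" for m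
    using stopping[of m] unfolding in_sigma_obs_def by blast
  have "stops_at n = {\<omega> \<in> space (coin_space \<mu>). T \<omega> \<le> enat n} -
      (if n = 0 then {} else {\<omega> \<in> space (coin_space \<mu>). T \<omega> \<le> enat (n - 1)})"
    by (auto simp: stops_at_def enat_eq_iff_le[of _ n])
  then show ?thesis using le by auto
qed

lemma T_eq_obs_iff:
  assumes \<omega>: "\<omega> \<in> space (coin_space \<mu>)"
  shows "T (obs (enat n) \<omega>) = enat n \<longleftrightarrow> T \<omega> = enat n"
proof -
  have "T (obs (enat (n - 1)) (obs (enat n) \<omega>)) \<le> enat (n - 1) \<longleftrightarrow> T \<omega> \<le> enat (n - 1)"
    using T_le_obs_iff[OF \<omega>, of "n - 1"] by (simp add: obs_obs)
  then have "T (obs (enat n) \<omega>) \<le> enat (n - 1) \<longleftrightarrow> T \<omega> \<le> enat (n - 1)"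
    using T_le_obs_iff[OF obs_in_space[OF \<omega>], of "n - 1"] by simp
  then show ?thesis
    using T_le_obs_iff[OF \<omega>, of n] by (subst (1 2) enat_eq_iff_le[of _ n]) blast
qed

definition stopped_weight :: "((nat \<Rightarrow> bool) \<times> 'r \<Rightarrow> real) \<Rightarrow> bool list \<Rightarrow> 'r \<Rightarrow> real" where
  "stopped_weight Q w r = Q (pad_word w, r) * indicator (stops_at (length w)) (pad_word w, r)"

definition stopped_part ::
    "((nat \<Rightarrow> bool) \<times> 'r \<Rightarrow> real) \<Rightarrow> bool list \<Rightarrow> (nat \<Rightarrow> bool) \<times> 'r \<Rightarrow> real" where
  "stopped_part Q w \<omega> = indicator (cylinder w) (fst \<omega>) * stopped_weight Q w (snd \<omega>)"

end

locale bounded_stopped_statistic = coin_stopping_time \<mu> T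
  for \<mu> :: "'r measure" and T :: "(nat \<Rightarrow> bool) \<times> 'r \<Rightarrow> enat" +
  fixes Q :: "(nat \<Rightarrow> bool) \<times> 'r \<Rightarrow> real" and B :: real
  assumes Q_meas: "Q \<in> borel_measurable (coin_space \<mu>)"
    and Q_stopped: "\<And>\<omega>. \<omega> \<in> space (coin_space \<mu>) \<Longrightarrow> Q \<omega> = Q (obs (T \<omega>) \<omega>)"
    and Q_nonneg: "\<And>\<omega>. \<omega> \<in> space (coin_space \<mu>) \<Longrightarrow> 0 \<le> Q \<omega>"
    and Q_bounded: "\<And>\<omega>. \<omega> \<in> space (coin_space \<mu>) \<Longrightarrow> Q \<omega> \<le> B"
begin

lemma stopped_part_nonneg: "\<omega> \<in> space (coin_space \<mu>) \<Longrightarrow> 0 \<le> stopped_part Q w \<omega>"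
  using Q_nonneg[of "(pad_word w, snd \<omega>)"]
  by (auto simp: stopped_part_def stopped_weight_def space_coin_space)

lemma stopped_part_le:
  assumes \<omega>: "\<omega> \<in> space (coin_space \<mu>)"
  shows "stopped_part Q w \<omega> \<le> Q \<omega>"
proof (cases "fst \<omega> \<in> cylinder w \<and> (pad_word w, snd \<omega>) \<in> stops_at (length w)")
  case True
  then have obs: "obs (enat (length w)) \<omega> = (pad_word w, snd \<omega>)" by (simp add: obs_cylinder)
  with True have "T \<omega> = enat (length w)"
    using T_eq_obs_iff[OF \<omega>, of "length w"] by (simp add: stops_at_def)
  then have "Q \<omega> = Q (pad_word w, snd \<omega>)" using Q_stopped[OF \<omega>] obs by simp
  then show ?thesis using True by (simp add: stopped_part_def stopped_weight_def)
next
  case False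
  then show ?thesis using Q_nonneg[OF \<omega>] by (auto simp: stopped_part_def stopped_weight_def)
qed

lemma stopped_part_prefix:
  assumes \<omega>: "\<omega> \<in> space (coin_space \<mu>)" and T: "T \<omega> = enat n"
  shows "stopped_part Q (map (fst \<omega>) [0..<n]) \<omega> = Q \<omega>"
proof -
  have "obs (enat n) \<omega> \<in> stops_at n"
    using T_eq_obs_iff[OF \<omega>] T obs_in_space[OF \<omega>] by (simp add: stops_at_def)
  moreover have "Q \<omega> = Q (obs (enat n) \<omega>)" using Q_stopped[OF \<omega>] T by simp
  ultimately show ?thesis
    using prefix_in_cylinder[of \<omega> n]
    by (simp add: stopped_part_def stopped_weight_def obs_eq_prefix)
qed

lemma stopped_weight_measurable: "stopped_weight Q w \<in> borel_measurable \<mu>"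
proof -
  have pad: "(\<lambda>r. (pad_word w, r)) \<in> \<mu> \<rightarrow>\<^sub>M coin_space \<mu>"
    unfolding coin_space_def by (rule measurable_Pair1') (simp add: space_PiM)
  show ?thesis
    unfolding stopped_weight_def
    using measurable_comp[OF pad Q_meas]
      measurable_comp[OF pad borel_measurable_indicator[OF sets_stops_at]]
    by (auto simp: o_def intro!: borel_measurable_times)
qed

lemma stopped_part_measurable: "stopped_part Q w \<in> borel_measurable (coin_law \<mu> p)"
  unfolding stopped_part_def coin_law_eq
  using measurable_comp[OF measurable_fst borel_measurable_indicator[OF sets_cylinder]]
    measurable_comp[OF measurable_snd stopped_weight_measurable]
  by (auto simp: o_def intro!: borel_measurable_times)

lemma integrable_statistic: "integrable (coin_law \<mu> p) Q"
proof -
  interpret P: prob_space "coin_law \<mu> p" by (rule prob_space_coin_law[OF prob_space_base])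
  show ?thesis
  proof (rule P.integrable_const_bound[where B = B])
    show "AE \<omega> in coin_law \<mu> p. norm (Q \<omega>) \<le> B"
      using Q_nonneg Q_bounded by (intro AE_I2) (simp add: space_coin_law)
    show "Q \<in> borel_measurable (coin_law \<mu> p)"
      using Q_meas measurable_cong_sets[OF sets_coin_law refl] by blast
  qed
qed

lemma integrable_stopped_part: "integrable (coin_law \<mu> p) (stopped_part Q w)"
proof (rule Bochner_Integration.integrable_bound[OF integrable_statistic stopped_part_measurable])
  show "AE \<omega> in coin_law \<mu> p. norm (stopped_part Q w \<omega>) \<le> norm (Q \<omega>)"
    using stopped_part_nonneg stopped_part_le Q_nonneg by (intro AE_I2) (simp add: space_coin_law)
qed

(* Coins and R0 are independent, so the part of w factorises. *)
lemma integral_stopped_part: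
  "integral\<^sup>L (coin_law \<mu> p) (stopped_part Q w)
     = measure (bernoulli_coins p) (cylinder w) * integral\<^sup>L \<mu> (stopped_weight Q w)"
proof -
  interpret coins: prob_space "bernoulli_coins p" by (rule prob_space_bernoulli_coins)
  interpret \<mu>: prob_space \<mu> by (rule prob_space_base)
  interpret pair_sigma_finite "bernoulli_coins p" \<mu> by unfold_locales
  have "integral\<^sup>L (coin_law \<mu> p) (stopped_part Q w)
      = (\<integral>x. (\<integral>r. stopped_part Q w (x, r) \<partial>\<mu>) \<partial>bernoulli_coins p)"
    using integral_fst'[of "stopped_part Q w"] integrable_stopped_part[of p w]
    by (simp add: coin_law_eq)
  also have "\<dots> = (\<integral>x. indicator (cylinder w) x * integral\<^sup>L \<mu> (stopped_weight Q w) \<partial>bernoulli_coins p)"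
    by (simp add: stopped_part_def)
  finally show ?thesis using sets_cylinder by simp
qed

lemma integral_ge_stopped_part:
  "measure (bernoulli_coins p) (cylinder w) * integral\<^sup>L \<mu> (stopped_weight Q w)
     \<le> integral\<^sup>L (coin_law \<mu> p) Q"
  unfolding integral_stopped_part[symmetric]
  using integrable_stopped_part integrable_statistic
  by (rule integral_mono) (auto simp: space_coin_law intro!: stopped_part_le)

(* If T is a.s. finite and Q has positive mean under some P_p0, then some word carries
   positive weight: otherwise every part vanishes a.s., and so does Q = sum of its parts. *)
lemma exists_positive_weight:
  assumes T_finite: "AE \<omega> in coin_law \<mu> p0. T \<omega> \<noteq> \<infinity>"
    and pos: "0 < integral\<^sup>L (coin_law \<mu> p0) Q"
  shows "\<exists>w. 0 < integral\<^sup>L \<mu> (stopped_weight Q w)"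
proof (rule ccontr)
  assume "\<not> ?thesis"
  then have le0: "integral\<^sup>L (coin_law \<mu> p0) (stopped_part Q w) \<le> 0" for w
    by (simp add: integral_stopped_part mult_nonneg_nonpos not_less)
  have nonneg: "AE \<omega> in coin_law \<mu> p0. 0 \<le> stopped_part Q w \<omega>" for w
    by (intro AE_I2) (simp add: space_coin_law stopped_part_nonneg)
  have "AE \<omega> in coin_law \<mu> p0. stopped_part Q w \<omega> = 0" for w
    using integral_nonneg_eq_0_iff_AE[OF integrable_stopped_part nonneg[of w]]
      integral_nonneg_AE[OF nonneg[of w]] le0[of w] by simp
  then have parts_vanish: "AE \<omega> in coin_law \<mu> p0. \<forall>w. stopped_part Q w \<omega> = 0"
    by (simp add: AE_all_countable)
  have "AE \<omega> in coin_law \<mu> p0. Q \<omega> = 0"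
    using parts_vanish T_finite AE_space
  proof eventually_elim
    case (elim \<omega>)
    then obtain n where n: "T \<omega> = enat n" by auto
    have \<omega>: "\<omega> \<in> space (coin_space \<mu>)" using elim(3) by (simp add: space_coin_law)
    show ?case using stopped_part_prefix[OF \<omega> n] elim(1) by metis
  qed
  then have "integral\<^sup>L (coin_law \<mu> p0) Q = 0" by (rule integral_eq_zero_AE)
  with pos show False by simp
qed

(* Hence a positive mean of Q under one P_p0 persists, uniformly, on the whole range
   1/4 <= p <= 3/4: the word w found above keeps probability at least 4^(-|w|) there. *)
lemma positive_mean_persists:
  assumes T_finite: "AE \<omega> in coin_law \<mu> p0. T \<omega> \<noteq> \<infinity>"
    and pos: "0 < integral\<^sup>L (coin_law \<mu> p0) Q"
  obtains c where "0 < c" and "\<And>p. p \<in> {1/4..3/4} \<Longrightarrow> c \<le> integral\<^sup>L (coin_law \<mu> p) Q"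
proof -
  obtain w where I: "0 < integral\<^sup>L \<mu> (stopped_weight Q w)"
    using exists_positive_weight[OF T_finite pos] by blast
  show thesis
  proof (rule that)
    show "0 < (1/4) ^ length w * integral\<^sup>L \<mu> (stopped_weight Q w)" using I by simp
  next
    fix p :: real assume p: "p \<in> {1/4..3/4}"
    have "(1/4) ^ length w * integral\<^sup>L \<mu> (stopped_weight Q w)
        \<le> measure (bernoulli_coins p) (cylinder w) * integral\<^sup>L \<mu> (stopped_weight Q w)"
      using measure_cylinder_lower_bound[OF p] I by (intro mult_right_mono) auto
    also have "\<dots> \<le> integral\<^sup>L (coin_law \<mu> p) Q" by (rule integral_ge_stopped_part)
    finally show "(1/4) ^ length w * integral\<^sup>L \<mu> (stopped_weight Q w) \<le> integral\<^sup>L (coin_law \<mu> p) Q" .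
  qed
qed

end

theorem corollary1:
  fixes \<mu> :: "'r measure"
    and T :: "(nat \<Rightarrow> bool) \<times> 'r \<Rightarrow> enat"
    and S :: "(nat \<Rightarrow> bool) \<times> 'r \<Rightarrow> real"
  assumes "prob_space \<mu>"
    and T_finite: "\<And>p. p \<in> {0<..<1/2} \<Longrightarrow> AE \<omega> in coin_law \<mu> p. T \<omega> \<noteq> \<infinity>"
    and T_stop: "\<And>n. in_sigma_obs \<mu> n {\<omega> \<in> space (coin_space \<mu>). T \<omega> \<le> enat n}"
    and S_meas: "S \<in> borel_measurable (coin_space \<mu>)"
    and S_dep: "\<And>\<omega>. \<omega> \<in> space (coin_space \<mu>) \<Longrightarrow> S \<omega> = S (obs (T \<omega>) \<omega>)"
    and S_range: "\<And>\<omega>. \<omega> \<in> space (coin_space \<mu>) \<Longrightarrow> 0 \<le> S \<omega> \<and> S \<omega> \<le> 1"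
  shows "\<not> (\<forall>p \<in> {0<..<1/2}. integral\<^sup>L (coin_law \<mu> p) S = 2 * p)"
proof
  assume mean: "\<forall>p \<in> {0<..<1/2}. integral\<^sup>L (coin_law \<mu> p) S = 2 * p"
  have stopping_time: "coin_stopping_time \<mu> T"
    by (rule coin_stopping_time.intro[OF \<open>prob_space \<mu>\<close> T_stop])
  interpret S: bounded_stopped_statistic \<mu> T S 1
    using S_range
    by (intro bounded_stopped_statistic.intro bounded_stopped_statistic_axioms.intro
        stopping_time S_meas S_dep) auto
  define Q where "Q \<omega> = 1 - S \<omega>" for \<omega>
  interpret Q: bounded_stopped_statistic \<mu> T Q 1
    unfolding Q_def using S_meas S_range
    by (intro bounded_stopped_statistic.intro bounded_stopped_statistic_axioms.intro
        stopping_time) (auto intro: arg_cong[OF S_dep])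
  have mean_Q: "integral\<^sup>L (coin_law \<mu> p) Q = 1 - 2 * p" if "p \<in> {0<..<1/2}" for p
  proof -
    interpret prob_space "coin_law \<mu> p" by (rule prob_space_coin_law[OF \<open>prob_space \<mu>\<close>])
    have "integral\<^sup>L (coin_law \<mu> p) Q = 1 - integral\<^sup>L (coin_law \<mu> p) S"
      unfolding Q_def using S.integrable_statistic
      by (subst Bochner_Integration.integral_diff) (auto simp: prob_space)
    then show ?thesis using mean that by simp
  qed
  have "AE \<omega> in coin_law \<mu> (1/4). T \<omega> \<noteq> \<infinity>" by (rule T_finite) simp
  moreover have "0 < integral\<^sup>L (coin_law \<mu> (1/4)) Q" by (subst mean_Q) simp_all
  ultimately obtain c where "0 < c"
    and c: "\<And>p. p \<in> {1/4..3/4} \<Longrightarrow> c \<le> integral\<^sup>L (coin_law \<mu> p) Q"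
    using Q.positive_mean_persists by blast
  (* A p in [1/4, 1/2) so close to 1/2 that 1 - 2p < c. *)
  define p where "p = 1/2 - min (1/8) (c/4)"
  have p: "p \<in> {0<..<1/2}" "p \<in> {1/4..3/4}" using \<open>0 < c\<close> by (auto simp: p_def)
  have "c \<le> 1 - 2 * p" using c[OF p(2)] mean_Q[OF p(1)] by simp
  then show False using \<open>0 < c\<close> by (auto simp: p_def)
qed

end
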